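(* Let $\mathbb{S}\subseteq\mathbb{R}$ be an interval and let $Q:\mathbb{S}\to\mathbb{R}$ be twice differentiable, with $q=Q'$, $f(z)=e^{Q(z)}$, $p(z)=1/(1+e^{-Q(z)})$ and $H(z)=\log(1+e^{Q(z)})$. If the matching loss $$\mathcal{L}_m(\hat s,s)=\log\big(1+e^{Q(\hat s)}\big)-\log\big(1+e^{Q(s)}\big)-(\hat s-s)\,q(s)\,p(s)$$ is convex in $\hat s$ over $\mathbb{S}$ (for all $s\in\mathbb{S}$), then $f'$ is non-decreasing on $\mathbb{S}$.
   Context: This is the case of regularization strength $\gamma=1$ of the composite Softplus primitive; $f$ is the score-transform function. *)

theory Defs
  imports "HOL-Analysis.Analysis"
begin

definition sp_p :: "(real \<Rightarrow> real) \<Rightarrow> real \<Rightarrow> real" where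
  "sp_p Q z = 1 / (1 + exp (- Q z))"

definition sp_H :: "(real \<Rightarrow> real) \<Rightarrow> real \<Rightarrow> real" where
  "sp_H Q z = ln (1 + exp (Q z))"

definition matching_loss ::
  "(real \<Rightarrow> real) \<Rightarrow> (real \<Rightarrow> real) \<Rightarrow> real \<Rightarrow> real \<Rightarrow> real" where
  "matching_loss Q q s_hat s = sp_H Q s_hat - sp_H Q s - (s_hat - s) * q s * sp_p Q s"

end

theory Submission
  imports Defs
begin

text \<open>The \<open>s_hat\<close>-derivative of the matching loss is \<open>H' s_hat - q s * p s\<close> with
  \<open>H' = q * p\<close>, so convexity makes \<open>q * p\<close> non-decreasing on the interior. There
  \<open>(q * p)' = p * (q' + q\<^sup>2 * (1 - p)) \<ge> 0\<close>, and as \<open>p > 0\<close> this gives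
  \<open>q' + q\<^sup>2 \<ge> q' + q\<^sup>2 * (1 - p) \<ge> 0\<close>. Hence \<open>f'' = exp Q * (q' + q\<^sup>2) \<ge> 0\<close>.\<close>

lemma convex_on_imp_mono_on_derivative:
  fixes f f' :: "real \<Rightarrow> real"
  assumes convex: "convex_on S f" and "connected S"
    and deriv: "\<And>x. x \<in> interior S \<Longrightarrow> (f has_real_derivative f' x) (at x)"
  shows "mono_on (interior S) f'"
proof (rule mono_onI)
  fix x y assume x: "x \<in> interior S" and y: "y \<in> interior S" and "x \<le> y"
  have "f y - f x \<ge> f' x * (y - x)"
    using convex_on_imp_above_tangent[OF convex \<open>connected S\<close> x] y interior_subset
      has_field_derivative_at_within[OF deriv[OF x]] by blast
  moreover have "f x - f y \<ge> f' y * (x - y)"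
    using convex_on_imp_above_tangent[OF convex \<open>connected S\<close> y] x interior_subset
      has_field_derivative_at_within[OF deriv[OF y]] by blast
  ultimately have "(f' y - f' x) * (y - x) \<ge> 0"
    by (simp add: algebra_simps)
  with \<open>x \<le> y\<close> show "f' x \<le> f' y"
    by (cases "x = y") (auto simp: zero_le_mult_iff)
qed

lemma DERIV_nonneg_interior_imp_mono_on:
  fixes f f' :: "real \<Rightarrow> real"
  assumes "is_interval S"
    and deriv: "\<And>x. x \<in> S \<Longrightarrow> (f has_real_derivative f' x) (at x within S)"
    and nonneg: "\<And>x. x \<in> interior S \<Longrightarrow> 0 \<le> f' x"
  shows "mono_on S f"
proof (rule mono_onI)
  fix x y assume "x \<in> S" "y \<in> S" "x \<le> y"
  have sub: "{x..y} \<subseteq> S"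
    using \<open>is_interval S\<close> \<open>x \<in> S\<close> \<open>y \<in> S\<close> unfolding is_interval_1
    by (meson atLeastAtMost_iff subsetI)
  show "f x \<le> f y"
  proof (rule DERIV_nonneg_imp_increasing_open[OF \<open>x \<le> y\<close>])
    fix z assume "x < z" "z < y"
    then have z: "z \<in> interior S"
      using interior_mono[OF sub] interior_atLeastAtMost_real by auto
    then have "(f has_real_derivative f' z) (at z)"
      using deriv[of z] interior_subset at_within_interior[OF z] by auto
    with nonneg[OF z] show "\<exists>l. (f has_real_derivative l) (at z) \<and> 0 \<le> l" by blast
  next
    have "continuous_on S f"
      using deriv by (metis DERIV_continuous continuous_on_eq_continuous_within)
    then show "continuous_on {x..y} f"
      using continuous_on_subset sub by blast
  qed
qed

lemma has_real_derivative_within_interval_unique: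
  fixes f :: "real \<Rightarrow> real"
  assumes "is_interval S" "x \<in> S" "y \<in> S" "x \<noteq> y"
    and "(f has_real_derivative a) (at x within S)"
    and "(f has_real_derivative b) (at x within S)"
  shows "a = b"
proof (rule has_field_derivative_unique[OF assms(5,6)])
  have "x islimpt S"
    using assms(1-4) by (intro connected_imp_perfect) (auto simp: is_interval_connected)
  then show "at x within S \<noteq> bot"
    by (simp add: trivial_limit_within)
qed

lemma sp_p_eq: "sp_p Q z = exp (Q z) / (1 + exp (Q z))"
  unfolding sp_p_def by (simp add: exp_minus field_simps add_pos_pos)

lemma sp_p_pos: "0 < sp_p Q z"
  by (simp add: sp_p_def add_pos_pos)

lemma sp_p_has_real_derivative:
  assumes "(Q has_real_derivative d) (at z within S)"
  shows "(sp_p Q has_real_derivative d * sp_p Q z * (1 - sp_p Q z)) (at z within S)"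
proof -
  have "1 + exp (- Q z) \<noteq> 0"
    using exp_gt_zero[of "- Q z"] by linarith
  then show ?thesis
    unfolding sp_p_def using assms
    by (auto intro!: derivative_eq_intros simp: field_simps)
qed

lemma matching_loss_has_real_derivative:
  assumes "(Q has_real_derivative d) (at w within S)"
  shows "((\<lambda>s_hat. matching_loss Q q s_hat s) has_real_derivative d * sp_p Q w - q s * sp_p Q s)
           (at w within S)"
proof -
  have "1 + exp (Q w) > 0"
    using exp_gt_zero[of "Q w"] by linarith
  then show ?thesis
    unfolding matching_loss_def sp_H_def sp_p_eq[of Q w] using assms
    by (auto intro!: derivative_eq_intros simp: field_simps)
qed

lemma matching_loss_convex_imp_mono_on:
  assumes "connected S"
    and dQ: "\<And>z. z \<in> S \<Longrightarrow> (Q has_real_derivative q z) (at z within S)"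
    and convex: "\<And>s. s \<in> S \<Longrightarrow> convex_on S (\<lambda>s_hat. matching_loss Q q s_hat s)"
  shows "mono_on (interior S) (\<lambda>w. q w * sp_p Q w)"
proof (rule mono_onI)
  fix x y assume x: "x \<in> interior S" and "y \<in> interior S" "x \<le> y"
  have "((\<lambda>s_hat. matching_loss Q q s_hat x) has_real_derivative q w * sp_p Q w - q x * sp_p Q x)
      (at w)" if "w \<in> interior S" for w
    using matching_loss_has_real_derivative[OF dQ[of w]] that interior_subset
      at_within_interior[OF that] by auto
  then have "mono_on (interior S) (\<lambda>w. q w * sp_p Q w - q x * sp_p Q x)"
    using convex[of x] x \<open>connected S\<close> interior_subset
    by (intro convex_on_imp_mono_on_derivative) auto
  with x \<open>y \<in> interior S\<close> \<open>x \<le> y\<close> show "q x * sp_p Q x \<le> q y * sp_p Q y"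
    by (auto dest: mono_onD)
qed

lemma mono_on_q_sp_p_imp_nonneg:
  assumes mono: "mono_on S (\<lambda>w. q w * sp_p Q w)" and "z \<in> interior S"
    and dQ: "(Q has_real_derivative q z) (at z)"
    and dq: "(q has_real_derivative q' z) (at z)"
  shows "0 \<le> q' z + (q z)\<^sup>2"
proof -
  let ?p = "sp_p Q z"
  have "((\<lambda>w. q w * sp_p Q w) has_real_derivative q' z * ?p + q z * (q z * ?p * (1 - ?p))) (at z)"
    using DERIV_mult[OF dq sp_p_has_real_derivative[OF dQ]] by (simp add: algebra_simps)
  from mono_on_imp_deriv_nonneg[OF mono this \<open>z \<in> interior S\<close>]
  have "0 \<le> (q' z + (q z)\<^sup>2 * (1 - ?p)) * ?p"
    by (simp add: algebra_simps power2_eq_square)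
  then have "0 \<le> q' z + (q z)\<^sup>2 * (1 - ?p)"
    using sp_p_pos[of Q z] by (simp add: zero_le_mult_iff)
  moreover have "(q z)\<^sup>2 * (1 - ?p) \<le> (q z)\<^sup>2"
    using sp_p_pos[of Q z] by (intro mult_left_le) auto
  ultimately show ?thesis by linarith
qed

theorem corollaryG3:
  fixes S :: "real set" and Q q q' :: "real \<Rightarrow> real"
  assumes "is_interval S"
    and "\<And>z. z \<in> S \<Longrightarrow> (Q has_real_derivative q z) (at z within S)"
    and "\<And>z. z \<in> S \<Longrightarrow> (q has_real_derivative q' z) (at z within S)"
    and "\<And>s. s \<in> S \<Longrightarrow> convex_on S (\<lambda>s_hat. matching_loss Q q s_hat s)"
  shows "\<forall>f'. (\<forall>z\<in>S. ((\<lambda>z. exp (Q z)) has_real_derivative f' z) (at z within S))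
           \<longrightarrow> mono_on S f'"
proof (intro allI impI)
  note interval = assms(1) and dQ = assms(2) and dq = assms(3)
  fix f' assume f': "\<forall>z\<in>S. ((\<lambda>z. exp (Q z)) has_real_derivative f' z) (at z within S)"
  have "mono_on (interior S) (\<lambda>w. q w * sp_p Q w)"
    using interval dQ assms(4) by (intro matching_loss_convex_imp_mono_on) (auto simp: is_interval_connected)
  then have curvature: "0 \<le> q' z + (q z)\<^sup>2" if "z \<in> interior S" for z
    using that dQ[of z] dq[of z] interior_subset at_within_interior[OF that]
    by (intro mono_on_q_sp_p_imp_nonneg[where S = "interior S" and Q = Q and q = q and q' = q']) auto
  have "((\<lambda>z. q z * exp (Q z)) has_real_derivative exp (Q z) * (q' z + (q z)\<^sup>2)) (at z within S)"
    if "z \<in> S" for z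
    using dQ[OF that] dq[OF that]
    by (auto intro!: derivative_eq_intros simp: algebra_simps power2_eq_square)
  then have "mono_on S (\<lambda>z. q z * exp (Q z))"
    using curvature by (intro DERIV_nonneg_interior_imp_mono_on[OF interval] mult_nonneg_nonneg) auto
  have "((\<lambda>z. exp (Q z)) has_real_derivative q z * exp (Q z)) (at z within S)" if "z \<in> S" for z
    using dQ[OF that] by (auto intro!: derivative_eq_intros)
  \<comment> \<open>derivatives within \<open>S\<close> are unique only if \<open>S\<close> has a second point; on a singleton
    \<open>f'\<close> is arbitrary, but trivially monotone\<close>
  then have f'_eq: "f' z = q z * exp (Q z)" if "z \<in> S" "w \<in> S" "z \<noteq> w" for z w
    using f' that by (intro has_real_derivative_within_interval_unique[OF interval]) auto
  show "mono_on S f'"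
  proof (rule mono_onI)
    fix x y assume "x \<in> S" "y \<in> S" "x \<le> y"
    with \<open>mono_on S (\<lambda>z. q z * exp (Q z))\<close> f'_eq[of x y] f'_eq[of y x] show "f' x \<le> f' y"
      by (cases "x = y") (auto dest: mono_onD)
  qed
qed

end
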